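(* Let $\mathbb{F}=\mathbb{F}_p$, $r_1,\dots,r_n\in\mathbb{F}^N$, and let $j_1,\dots,j_k\in[N]$ be distinct. Then $$\mathcal{S}^{\{j_1,\dots,j_k\}}(r_1,\dots,r_n)=\sum_{\tau=(\tau_1,\dots,\tau_k)}\ \prod_{t=1}^k\Big((-1)^{|\tau_t|}|\tau_t|!\;r_{\tau_t}(j_t)\Big)\cdot\mathcal{S}\Big(r\big[[n]\setminus\textstyle\bigcup_t\tau_t\big]\Big),$$ where the sum is over all ordered $k$-tuples of pairwise disjoint, possibly empty, subsets $\tau_t$ of $[n]$.
   Context: For vectors $w_1,\dots,w_L\in\mathbb{F}^N$ and $T\subseteq[N]$, $\mathcal{S}^T(w_1,\dots,w_L)=\sum_\rho\prod_{i=1}^Lw_i(\rho(i))$ over injective maps $\rho:[L]\to[N]\setminus T$, and $\mathcal{S}=\mathcal{S}^{\emptyset}$. For $\tau\subseteq[n]$, $r_\tau$ is the coordinatewise product of $r_i$, $i\in\tau$ (the all-ones vector if $\tau=\emptyset$); $r[\sigma]$ is the list of $r_i$, $i\in\sigma$, and $\mathcal{S}(r[\emptyset])=1$. $r(j)$ is the $j$-th coordinate. *)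

theory Defs
  imports Main "HOL-Library.FuncSet" "HOL-Library.Cardinality" "HOL-Computational_Algebra.Primes"
begin

text \<open>Vectors in F^N are functions nat => 'a, of which only the coordinates 1..N matter.\<close>
definition S_T :: "nat \<Rightarrow> nat set \<Rightarrow> (nat \<Rightarrow> 'a::comm_ring_1) list \<Rightarrow> 'a" where
  "S_T N T ws = (\<Sum>\<rho> \<in> {\<rho>. \<rho> \<in> {1..length ws} \<rightarrow>\<^sub>E ({1..N} - T) \<and> inj_on \<rho> {1..length ws}}.
      \<Prod>i=1..length ws. (ws ! (i - 1)) (\<rho> i))"

abbreviation S :: "nat \<Rightarrow> (nat \<Rightarrow> 'a::comm_ring_1) list \<Rightarrow> 'a" where
  "S N ws \<equiv> S_T N {} ws"

definition sublist_vecs :: "(nat \<Rightarrow> (nat \<Rightarrow> 'a)) \<Rightarrow> nat set \<Rightarrow> (nat \<Rightarrow> 'a) list" where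
  "sublist_vecs r \<sigma> = map r (sorted_list_of_set \<sigma>)"

definition prod_vec :: "(nat \<Rightarrow> (nat \<Rightarrow> 'a::comm_ring_1)) \<Rightarrow> nat set \<Rightarrow> nat \<Rightarrow> 'a" where
  "prod_vec r \<tau> = (\<lambda>j. \<Prod>i\<in>\<tau>. r i j)"

end

theory Submission
  imports Defs "HOL-Library.Disjoint_Sets"
begin

(*
  Write S_B(I) for the sum over injective maps \<rho> : I \<rightarrow> B of \<Prod>_i r_i(\<rho> i), and fix b \<in> B.
  Sorting the maps by the index, if any, that is sent to b gives
    S_B(I) = S_{B-{b}}(I) + \<Sum>_{i \<in> I} r_i(b) S_{B-{b}}(I - {i}).
  Solving this recurrence for S_{B-{b}} by induction on I gives
    S_{B-{b}}(I) = \<Sum>_{\<sigma> \<subseteq> I} (-1)^|\<sigma>| |\<sigma>|! r_\<sigma>(b) S_B(I - \<sigma>),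
  where |\<sigma>|! counts the orders in which the indices of \<sigma> can be removed. Removing j_1, ..., j_k
  from [N] one at a time yields the sum over disjoint tuples. Nothing about F_p is used: the
  identity holds in every commutative ring.
*)

definition inj_maps :: "'i set \<Rightarrow> 'b set \<Rightarrow> ('i \<Rightarrow> 'b) set" where
  "inj_maps I B = {\<rho> \<in> I \<rightarrow>\<^sub>E B. inj_on \<rho> I}"

definition inj_sum :: "('i \<Rightarrow> 'b \<Rightarrow> 'a::comm_ring_1) \<Rightarrow> 'b set \<Rightarrow> 'i set \<Rightarrow> 'a" where
  "inj_sum r B I = (\<Sum>\<rho>\<in>inj_maps I B. \<Prod>i\<in>I. r i (\<rho> i))"

lemma finite_inj_maps: "finite I \<Longrightarrow> finite B \<Longrightarrow> finite (inj_maps I B)"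
  unfolding inj_maps_def by (rule finite_subset[OF _ finite_PiE[of I "\<lambda>_. B"]]) auto

lemma inj_sum_reindex:
  assumes f: "bij_betw f I J"
  shows "inj_sum (\<lambda>i. r (f i)) B I = inj_sum r B J"
  unfolding inj_sum_def
proof (rule sum.reindex_bij_witness[where j="\<lambda>\<rho>. restrict (\<rho> \<circ> inv_into I f) J"
                                      and i="\<lambda>\<rho>. restrict (\<rho> \<circ> f) I"])
  have fI: "\<And>i. i \<in> I \<Longrightarrow> f i \<in> J" and gJ: "\<And>x. x \<in> J \<Longrightarrow> inv_into I f x \<in> I"
    and gf: "\<And>i. i \<in> I \<Longrightarrow> inv_into I f (f i) = i"
    and fg: "\<And>x. x \<in> J \<Longrightarrow> f (inv_into I f x) = x"
    using f by (auto simp: bij_betw_def inv_into_into)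
  show "restrict (restrict (\<rho> \<circ> inv_into I f) J \<circ> f) I = \<rho>" if "\<rho> \<in> inj_maps I B" for \<rho>
    using that fI gf by (auto simp: inj_maps_def PiE_def extensional_def fun_eq_iff)
  show "restrict (\<rho> \<circ> inv_into I f) J \<in> inj_maps J B" if "\<rho> \<in> inj_maps I B" for \<rho>
    using that gJ fg unfolding inj_maps_def inj_on_def by (auto simp: PiE_def extensional_def Pi_def) metis
  show "restrict (restrict (\<rho> \<circ> f) I \<circ> inv_into I f) J = \<rho>" if "\<rho> \<in> inj_maps J B" for \<rho>
    using that gJ fg by (auto simp: inj_maps_def PiE_def extensional_def fun_eq_iff)
  show "restrict (\<rho> \<circ> f) I \<in> inj_maps I B" if "\<rho> \<in> inj_maps J B" for \<rho>
    using that fI gf unfolding inj_maps_def inj_on_def by (auto simp: PiE_def extensional_def Pi_def) metis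
  show "(\<Prod>x\<in>J. r x (restrict (\<rho> \<circ> inv_into I f) J x)) = (\<Prod>i\<in>I. r (f i) (\<rho> i))"
    if "\<rho> \<in> inj_maps I B" for \<rho>
    using prod.reindex_bij_betw[OF f, of "\<lambda>x. r x (restrict (\<rho> \<circ> inv_into I f) J x)"]
    by (auto simp: fI gf intro!: prod.cong)
qed

lemma S_T_eq_inj_sum:
  assumes "finite \<sigma>"
  shows "S_T N T (sublist_vecs r \<sigma>) = inj_sum r ({1..N} - T) \<sigma>"
proof -
  define s where "s = sorted_list_of_set \<sigma>"
  have "bij_betw (\<lambda>i. s ! (i - 1)) {1..length s} \<sigma>"
  proof (rule bij_betw_trans[of "\<lambda>i. i - 1" _ "{..<length s}", unfolded comp_def])
    show "bij_betw (\<lambda>i. i - 1) {1..length s} {..<length s}"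
      by (rule bij_betw_byWitness[where f'=Suc]) auto
    show "bij_betw ((!) s) {..<length s} \<sigma>"
      by (rule bij_betw_nth) (use assms in \<open>auto simp: s_def\<close>)
  qed
  then have "inj_sum (\<lambda>i. r (s ! (i - 1))) ({1..N} - T) {1..length s} = inj_sum r ({1..N} - T) \<sigma>"
    by (rule inj_sum_reindex)
  moreover have "S_T N T (sublist_vecs r \<sigma>) = inj_sum (\<lambda>i. r (s ! (i - 1))) ({1..N} - T) {1..length s}"
    unfolding S_T_def inj_sum_def inj_maps_def sublist_vecs_def s_def[symmetric]
    by (intro sum.cong prod.cong) auto
  ultimately show ?thesis by simp
qed

lemma inj_sum_hitting:
  assumes "finite I" and "i \<in> I" and "b \<in> B"
  shows "(\<Sum>\<rho>\<in>{\<rho> \<in> inj_maps I B. \<rho> i = b}. \<Prod>x\<in>I. r x (\<rho> x)) = r i b * inj_sum r (B - {b}) (I - {i})"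
  unfolding inj_sum_def sum_distrib_left
proof (rule sum.reindex_bij_witness[where i="\<lambda>\<rho>. \<rho>(i := b)" and j="\<lambda>\<rho>. \<rho>(i := undefined)"])
  fix \<rho> assume "\<rho> \<in> {\<rho> \<in> inj_maps I B. \<rho> i = b}"
  then have \<rho>: "\<rho> \<in> I \<rightarrow>\<^sub>E B" "inj_on \<rho> I" "\<rho> i = b" by (auto simp: inj_maps_def)
  show "(\<rho>(i := undefined))(i := b) = \<rho>" using \<rho> by auto
  show "\<rho>(i := undefined) \<in> inj_maps (I - {i}) (B - {b})"
    using \<rho> assms(2) unfolding inj_maps_def by (auto simp: PiE_def extensional_def inj_on_def)
  have "(\<Prod>x\<in>I. r x (\<rho> x)) = r i b * (\<Prod>x\<in>I - {i}. r x ((\<rho>(i := undefined)) x))"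
    using assms(1,2) \<rho>(3) by (simp add: prod.remove)
  then show "r i b * (\<Prod>x\<in>I - {i}. r x ((\<rho>(i := undefined)) x)) = (\<Prod>x\<in>I. r x (\<rho> x))" ..
next
  fix \<rho> assume "\<rho> \<in> inj_maps (I - {i}) (B - {b})"
  then have \<rho>: "\<rho> \<in> (I - {i}) \<rightarrow>\<^sub>E (B - {b})" "inj_on \<rho> (I - {i})" by (auto simp: inj_maps_def)
  then show "(\<rho>(i := b))(i := undefined) = \<rho>" by (auto simp: PiE_def extensional_def)
  show "\<rho>(i := b) \<in> {\<rho> \<in> inj_maps I B. \<rho> i = b}"
    using \<rho> assms(2,3) unfolding inj_maps_def
    by (auto simp: PiE_def extensional_def inj_on_def Pi_def split: if_splits)
qed

lemma inj_sum_remove_target: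
  assumes "finite B" and "finite I" and "b \<in> B"
  shows "inj_sum r B I = inj_sum r (B - {b}) I + (\<Sum>i\<in>I. r i b * inj_sum r (B - {b}) (I - {i}))"
proof -
  let ?hit = "\<lambda>i. {\<rho> \<in> inj_maps I B. \<rho> i = b}"
  have inj_maps_split: "inj_maps I B = inj_maps I (B - {b}) \<union> (\<Union>i\<in>I. ?hit i)"
    unfolding inj_maps_def by (auto simp: PiE_def Pi_def)
  have fin: "finite (inj_maps I B)" by (rule finite_inj_maps[OF assms(2,1)])
  have "inj_sum r B I = inj_sum r (B - {b}) I + (\<Sum>\<rho>\<in>(\<Union>i\<in>I. ?hit i). \<Prod>x\<in>I. r x (\<rho> x))"
    unfolding inj_sum_def
  proof (subst inj_maps_split, rule sum.union_disjoint)
    show "finite (inj_maps I (B - {b}))" using assms by (simp add: finite_inj_maps)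
    show "finite (\<Union>i\<in>I. ?hit i)" by (rule finite_subset[OF _ fin]) blast
  qed (auto simp: inj_maps_def dest: PiE_mem)
  also have "(\<Sum>\<rho>\<in>(\<Union>i\<in>I. ?hit i). \<Prod>x\<in>I. r x (\<rho> x)) = (\<Sum>i\<in>I. \<Sum>\<rho>\<in>?hit i. \<Prod>x\<in>I. r x (\<rho> x))"
  proof (rule sum.UNION_disjoint)
    show "\<forall>i\<in>I. finite (?hit i)" using fin by auto
  qed (use assms(2) in \<open>auto simp: inj_maps_def inj_on_def\<close>)
  also have "\<dots> = (\<Sum>i\<in>I. r i b * inj_sum r (B - {b}) (I - {i}))"
    using assms by (intro sum.cong refl inj_sum_hitting) auto
  finally show ?thesis .
qed

definition peel_coeff :: "('i \<Rightarrow> 'b \<Rightarrow> 'a::comm_ring_1) \<Rightarrow> 'i set \<Rightarrow> 'b \<Rightarrow> 'a" where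
  "peel_coeff r \<sigma> b = (-1) ^ card \<sigma> * of_nat (fact (card \<sigma>)) * (\<Prod>i\<in>\<sigma>. r i b)"

lemma peel_coeff_empty [simp]: "peel_coeff r {} b = 1"
  by (simp add: peel_coeff_def)

lemma sum_peel_coeff_remove:
  assumes "finite \<sigma>" and "\<sigma> \<noteq> {}"
  shows "(\<Sum>i\<in>\<sigma>. r i b * peel_coeff r (\<sigma> - {i}) b) = - peel_coeff r \<sigma> b"
proof -
  obtain m where m: "card \<sigma> = Suc m"
    using assms by (metis card_0_eq not0_implies_Suc)
  have "r i b * peel_coeff r (\<sigma> - {i}) b = (-1) ^ m * of_nat (fact m) * (\<Prod>i\<in>\<sigma>. r i b)"
    if "i \<in> \<sigma>" for i
    using that assms(1) m by (simp add: peel_coeff_def prod.remove algebra_simps)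
  then have "(\<Sum>i\<in>\<sigma>. r i b * peel_coeff r (\<sigma> - {i}) b)
      = of_nat (Suc m) * ((-1) ^ m * of_nat (fact m) * (\<Prod>i\<in>\<sigma>. r i b))"
    using m by simp
  also have "\<dots> = - peel_coeff r \<sigma> b"
    unfolding peel_coeff_def m by (simp add: algebra_simps)
  finally show ?thesis .
qed

lemma sum_Pow_remove_reindex:
  assumes "finite I"
  shows "(\<Sum>i\<in>I. \<Sum>\<tau>\<in>Pow (I - {i}). f i \<tau>) = (\<Sum>\<sigma>\<in>Pow I - {{}}. \<Sum>i\<in>\<sigma>. f i (\<sigma> - {i}))"
proof -
  have "(\<Sum>i\<in>I. \<Sum>\<tau>\<in>Pow (I - {i}). f i \<tau>) = (\<Sum>(i, \<tau>)\<in>Sigma I (\<lambda>i. Pow (I - {i})). f i \<tau>)"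
    using assms by (subst sum.Sigma) auto
  also have "\<dots> = (\<Sum>(\<sigma>, i)\<in>Sigma (Pow I - {{}}) (\<lambda>\<sigma>. \<sigma>). f i (\<sigma> - {i}))"
    by (rule sum.reindex_bij_witness[where i="\<lambda>(\<sigma>, i). (i, \<sigma> - {i})" and j="\<lambda>(i, \<tau>). (insert i \<tau>, i)"])
       (auto simp: subset_Diff_insert)
  also have "\<dots> = (\<Sum>\<sigma>\<in>Pow I - {{}}. \<Sum>i\<in>\<sigma>. f i (\<sigma> - {i}))"
    using assms by (subst sum.Sigma) (auto intro: finite_subset)
  finally show ?thesis .
qed

lemma inj_sum_remove_point:
  assumes "finite B" and "b \<in> B" and "finite I"
  shows "inj_sum r (B - {b}) I = (\<Sum>\<sigma>\<in>Pow I. peel_coeff r \<sigma> b * inj_sum r B (I - \<sigma>))"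
  using assms(3)
proof (induction I rule: finite_psubset_induct)
  case (psubset I)
  let ?c = "\<lambda>\<sigma>. peel_coeff r \<sigma> b"
  have "(\<Sum>i\<in>I. r i b * inj_sum r (B - {b}) (I - {i}))
      = (\<Sum>i\<in>I. \<Sum>\<tau>\<in>Pow (I - {i}). r i b * ?c \<tau> * inj_sum r B (I - {i} - \<tau>))"
  proof (rule sum.cong[OF refl])
    fix i assume "i \<in> I"
    then have "I - {i} \<subset> I" by blast
    then show "r i b * inj_sum r (B - {b}) (I - {i})
        = (\<Sum>\<tau>\<in>Pow (I - {i}). r i b * ?c \<tau> * inj_sum r B (I - {i} - \<tau>))"
      by (simp add: psubset.IH sum_distrib_left mult.assoc)
  qed
  also have "\<dots> = (\<Sum>\<sigma>\<in>Pow I - {{}}. \<Sum>i\<in>\<sigma>. r i b * ?c (\<sigma> - {i}) * inj_sum r B (I - {i} - (\<sigma> - {i})))"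
    by (rule sum_Pow_remove_reindex[OF psubset.hyps(1)])
  also have "\<dots> = (\<Sum>\<sigma>\<in>Pow I - {{}}. (\<Sum>i\<in>\<sigma>. r i b * ?c (\<sigma> - {i})) * inj_sum r B (I - \<sigma>))"
    unfolding sum_distrib_right
    by (intro sum.cong refl arg_cong2[where f="(*)"] arg_cong[where f="inj_sum r B"]) auto
  also have "\<dots> = (\<Sum>\<sigma>\<in>Pow I - {{}}. - ?c \<sigma> * inj_sum r B (I - \<sigma>))"
  proof (rule sum.cong[OF refl])
    fix \<sigma> assume "\<sigma> \<in> Pow I - {{}}"
    then have "finite \<sigma>" "\<sigma> \<noteq> {}" using finite_subset psubset.hyps(1) by auto
    then show "(\<Sum>i\<in>\<sigma>. r i b * ?c (\<sigma> - {i})) * inj_sum r B (I - \<sigma>) = - ?c \<sigma> * inj_sum r B (I - \<sigma>)"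
      by (simp add: sum_peel_coeff_remove)
  qed
  finally have "(\<Sum>i\<in>I. r i b * inj_sum r (B - {b}) (I - {i}))
      = - (\<Sum>\<sigma>\<in>Pow I - {{}}. ?c \<sigma> * inj_sum r B (I - \<sigma>))"
    by (simp add: sum_negf)
  moreover have "(\<Sum>\<sigma>\<in>Pow I. ?c \<sigma> * inj_sum r B (I - \<sigma>))
      = inj_sum r B I + (\<Sum>\<sigma>\<in>Pow I - {{}}. ?c \<sigma> * inj_sum r B (I - \<sigma>))"
    using psubset.hyps(1) by (subst sum.remove[of _ "{}"]) auto
  ultimately show ?case
    using inj_sum_remove_target[OF assms(1) psubset.hyps(1) assms(2), of r] by simp
qed

definition disjoint_tuples :: "nat \<Rightarrow> 'i set \<Rightarrow> (nat \<Rightarrow> 'i set) set" where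
  "disjoint_tuples k I = {\<tau> \<in> {1..k} \<rightarrow>\<^sub>E Pow I. disjoint_family_on \<tau> {1..k}}"

lemma finite_disjoint_tuples: "finite I \<Longrightarrow> finite (disjoint_tuples k I)"
  unfolding disjoint_tuples_def by (rule finite_subset[OF _ finite_PiE[of "{1..k}" "\<lambda>_. Pow I"]]) auto

lemma disjoint_tuples_extend:
  assumes "\<sigma> \<subseteq> I" and "\<tau> \<in> disjoint_tuples k (I - \<sigma>)"
  shows "\<tau>(Suc k := \<sigma>) \<in> disjoint_tuples (Suc k) I"
  using assms unfolding disjoint_tuples_def disjoint_family_on_def
  by (auto simp: PiE_iff extensional_def atLeastAtMostSuc_conv)

lemma disjoint_tuples_restrict:
  assumes "\<tau> \<in> disjoint_tuples (Suc k) I"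
  shows "\<tau> (Suc k) \<subseteq> I" and "\<tau>(Suc k := undefined) \<in> disjoint_tuples k (I - \<tau> (Suc k))"
  using assms unfolding disjoint_tuples_def disjoint_family_on_def
  by (auto simp: PiE_iff extensional_def atLeastAtMostSuc_conv)

lemma sum_disjoint_tuples_Suc:
  assumes "finite I"
  shows "(\<Sum>\<sigma>\<in>Pow I. \<Sum>\<tau>\<in>disjoint_tuples k (I - \<sigma>). f (\<tau>(Suc k := \<sigma>)))
       = (\<Sum>\<tau>\<in>disjoint_tuples (Suc k) I. f \<tau>)"
proof -
  have "(\<Sum>\<sigma>\<in>Pow I. \<Sum>\<tau>\<in>disjoint_tuples k (I - \<sigma>). f (\<tau>(Suc k := \<sigma>)))
      = (\<Sum>(\<sigma>, \<tau>)\<in>Sigma (Pow I) (\<lambda>\<sigma>. disjoint_tuples k (I - \<sigma>)). f (\<tau>(Suc k := \<sigma>)))"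
    using assms by (subst sum.Sigma) (auto intro: finite_disjoint_tuples)
  also have "\<dots> = (\<Sum>\<tau>\<in>disjoint_tuples (Suc k) I. f \<tau>)"
  proof (rule sum.reindex_bij_witness[where i="\<lambda>\<tau>. (\<tau> (Suc k), \<tau>(Suc k := undefined))"
                                       and j="\<lambda>(\<sigma>, \<tau>). \<tau>(Suc k := \<sigma>)"])
    fix p assume "p \<in> Sigma (Pow I) (\<lambda>\<sigma>. disjoint_tuples k (I - \<sigma>))"
    then obtain \<sigma> \<tau> where p: "p = (\<sigma>, \<tau>)" "\<sigma> \<subseteq> I" "\<tau> \<in> disjoint_tuples k (I - \<sigma>)" by auto
    then have "\<tau> (Suc k) = undefined"
      by (auto simp: disjoint_tuples_def PiE_def extensional_def)
    with p show "(\<lambda>\<tau>. (\<tau> (Suc k), \<tau>(Suc k := undefined))) ((\<lambda>(\<sigma>, \<tau>). \<tau>(Suc k := \<sigma>)) p) = p"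
      by (simp add: fun_upd_idem)
    show "(\<lambda>(\<sigma>, \<tau>). \<tau>(Suc k := \<sigma>)) p \<in> disjoint_tuples (Suc k) I"
      using p by (simp add: disjoint_tuples_extend)
  qed (auto simp: disjoint_tuples_restrict)
  finally show ?thesis .
qed

lemma inj_sum_remove_points:
  assumes "finite B" and "finite I" and "inj_on j {1..k}" and "j ` {1..k} \<subseteq> B"
  shows "inj_sum r (B - j ` {1..k}) I
       = (\<Sum>\<tau>\<in>disjoint_tuples k I. (\<Prod>t=1..k. peel_coeff r (\<tau> t) (j t)) * inj_sum r B (I - (\<Union>t\<in>{1..k}. \<tau> t)))"
  using assms(2-4)
proof (induction k arbitrary: I)
  case 0
  then show ?case by (simp add: disjoint_tuples_def disjoint_family_on_def)
next
  case (Suc k)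
  let ?B = "B - j ` {1..k}" and ?c = "\<lambda>\<tau> t. peel_coeff r (\<tau> t) (j t)"
  have "j (Suc k) \<in> ?B"
    using Suc.prems by (auto simp: inj_on_def atLeastAtMostSuc_conv)
  moreover have "B - j ` {1..Suc k} = ?B - {j (Suc k)}"
    by (auto simp: atLeastAtMostSuc_conv)
  ultimately have "inj_sum r (B - j ` {1..Suc k}) I
      = (\<Sum>\<sigma>\<in>Pow I. peel_coeff r \<sigma> (j (Suc k)) * inj_sum r ?B (I - \<sigma>))"
    using assms(1) Suc.prems(1) by (simp add: inj_sum_remove_point)
  also have "\<dots> = (\<Sum>\<sigma>\<in>Pow I. \<Sum>\<tau>\<in>disjoint_tuples k (I - \<sigma>).
      (\<Prod>t=1..Suc k. ?c (\<tau>(Suc k := \<sigma>)) t) * inj_sum r B (I - (\<Union>t\<in>{1..Suc k}. (\<tau>(Suc k := \<sigma>)) t)))"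
  proof (rule sum.cong[OF refl])
    fix \<sigma> assume "\<sigma> \<in> Pow I"
    have IH: "inj_sum r ?B (I - \<sigma>)
        = (\<Sum>\<tau>\<in>disjoint_tuples k (I - \<sigma>). (\<Prod>t=1..k. ?c \<tau> t) * inj_sum r B (I - \<sigma> - (\<Union>t\<in>{1..k}. \<tau> t)))"
      using Suc.prems by (intro Suc.IH) (auto intro: inj_on_subset)
    have prod_upd: "(\<Prod>t=1..Suc k. ?c (\<tau>(Suc k := \<sigma>)) t) = peel_coeff r \<sigma> (j (Suc k)) * (\<Prod>t=1..k. ?c \<tau> t)"
      and union_upd: "I - (\<Union>t\<in>{1..Suc k}. (\<tau>(Suc k := \<sigma>)) t) = I - \<sigma> - (\<Union>t\<in>{1..k}. \<tau> t)" for \<tau>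
      by (auto simp: atLeastAtMostSuc_conv mult.commute)
    then show "peel_coeff r \<sigma> (j (Suc k)) * inj_sum r ?B (I - \<sigma>) = (\<Sum>\<tau>\<in>disjoint_tuples k (I - \<sigma>).
      (\<Prod>t=1..Suc k. ?c (\<tau>(Suc k := \<sigma>)) t) * inj_sum r B (I - (\<Union>t\<in>{1..Suc k}. (\<tau>(Suc k := \<sigma>)) t)))"
      unfolding prod_upd union_upd IH sum_distrib_left by (simp add: mult_ac)
  qed
  also have "\<dots> = (\<Sum>\<tau>\<in>disjoint_tuples (Suc k) I. (\<Prod>t=1..Suc k. ?c \<tau> t) * inj_sum r B (I - (\<Union>t\<in>{1..Suc k}. \<tau> t)))"
    by (rule sum_disjoint_tuples_Suc[OF Suc.prems(1)])
  finally show ?case .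
qed

theorem proposition2p7:
  fixes p N n k :: nat
    and r :: "nat \<Rightarrow> (nat \<Rightarrow> 'a::{field, finite})"
    and j :: "nat \<Rightarrow> nat"
  assumes "prime p" and "CARD('a) = p"
    and "inj_on j {1..k}" and "j ` {1..k} \<subseteq> {1..N}"
  shows "S_T N (j ` {1..k}) (sublist_vecs r {1..n}) =
    (\<Sum>\<tau> \<in> {\<tau>. \<tau> \<in> {1..k} \<rightarrow>\<^sub>E Pow {1..n} \<and>
              (\<forall>s\<in>{1..k}. \<forall>t\<in>{1..k}. s \<noteq> t \<longrightarrow> \<tau> s \<inter> \<tau> t = {})}.
       (\<Prod>t=1..k. (-1) ^ card (\<tau> t) * of_nat (fact (card (\<tau> t)) :: nat) * prod_vec r (\<tau> t) (j t))
       * S N (sublist_vecs r ({1..n} - (\<Union>t\<in>{1..k}. \<tau> t))))"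
proof -
  have "S_T N (j ` {1..k}) (sublist_vecs r {1..n}) = inj_sum r ({1..N} - j ` {1..k}) {1..n}"
    by (simp add: S_T_eq_inj_sum)
  also have "\<dots> = (\<Sum>\<tau>\<in>disjoint_tuples k {1..n}.
      (\<Prod>t=1..k. peel_coeff r (\<tau> t) (j t)) * inj_sum r {1..N} ({1..n} - (\<Union>t\<in>{1..k}. \<tau> t)))"
    by (rule inj_sum_remove_points) (use assms in auto)
  also have "\<dots> = (\<Sum>\<tau>\<in>disjoint_tuples k {1..n}.
      (\<Prod>t=1..k. peel_coeff r (\<tau> t) (j t)) * S N (sublist_vecs r ({1..n} - (\<Union>t\<in>{1..k}. \<tau> t))))"
    by (simp add: S_T_eq_inj_sum)
  finally show ?thesis
    by (simp add: disjoint_tuples_def disjoint_family_on_def peel_coeff_def prod_vec_def)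
qed

end
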